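(* Consider the Team Surviving Orienteers setting described in the context, with feasible path set $\mathcal{X}(p_s,\omega)$ and priorities $d_j>0$. Define the set function $J:2^{\mathcal{X}(p_s,\omega)}\to\mathbb{R}$ by $$J(X)=\sum_{j=1}^V d_j\,\mathbb{E}\Big[1-\prod_{\rho\in X}\big(1-z_j(\rho)\big)\Big]=\sum_{j=1}^V d_j\Big(1-\prod_{\rho\in X}\big(1-\mathbb{E}[z_j(\rho)]\big)\Big),$$ i.e. the weighted expected number of nodes visited by at least one robot when robots follow the paths in $X$. Then $J$ is normalized, non-negative, monotone and submodular.
   Context: Let $\mathcal{G}=(\mathcal{V},\mathcal{E})$ be a finite simple graph with node set $\mathcal{V}=\{1,\dots,V\}$ and edge weights $\omega:\mathcal{E}\to(0,1]$, where $\omega(e)$ is the probability of surviving traversal of edge $e$. A path $\rho$ is a sequence of nodes $\rho(0),\rho(1),\dots,\rho(\lvert\rho\rvert)$ with $(\rho(n-1),\rho(n))\in\mathcal{E}$ for each $n$; $\lvert\rho\rvert$ is its number of edges. For a path $\rho$, let $s_1(\rho),\dots,s_{\lvert\rho\rvert}(\rho)$ be independent Bernoulli random variables with $\mathbb{P}\{s_n(\rho)=1\}=\omega((\rho(n-1),\rho(n)))$, let $a_n(\rho)=\prod_{i=1}^n s_i(\rho)$, and for each node $j$ let $z_j(\rho)=\max_{n=1,\dots,\lvert\rho\rvert} a_n(\rho)\,\mathbb{I}\{\rho(n)=j\}$ (the indicator that a robot following $\rho$ reaches node $j$). Random variables associated with distinct paths are independent. Given a start node $v_s$, a terminal node $v_t$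 and $p_s\in(0,1]$, the feasible set $\mathcal{X}(p_s,\omega)$ is the (assumed nonempty) set of paths $\rho$ with $\rho(0)=v_s$, $\rho(\lvert\rho\rvert)=v_t$ and $\mathbb{P}\{a_{\lvert\rho\rvert}(\rho)=1\}\ge p_s$. Normalized means $J(\emptyset)=0$; monotone means $J(X)\le J(X')$ for $X\subseteq X'$; submodular means $J(X\cup\{\rho\})-J(X)\ge J(X'\cup\{\rho\})-J(X')$ for all $X\subseteq X'\subset\mathcal{X}(p_s,\omega)$ and $\rho\in\mathcal{X}(p_s,\omega)\setminus X'$. *)

theory Defs
  imports "HOL-Probability.Probability"
begin

text \<open>Graph on nodes {1..V}, edge set E of ordered pairs (symmetric, irreflexive = simple undirected graph).
  A path is a nonempty list of nodes; rho(n) = rho ! n, |rho| = length rho - 1.\<close>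

definition simple_graph :: "nat \<Rightarrow> (nat \<times> nat) set \<Rightarrow> bool" where
  "simple_graph V E \<longleftrightarrow> E \<subseteq> {1..V} \<times> {1..V} \<and> (\<forall>a b. (a, b) \<in> E \<longrightarrow> (b, a) \<in> E) \<and> (\<forall>a. (a, a) \<notin> E)"

definition valid_weights :: "(nat \<times> nat) set \<Rightarrow> (nat \<times> nat \<Rightarrow> real) \<Rightarrow> bool" where
  "valid_weights E \<omega> \<longleftrightarrow> (\<forall>e\<in>E. 0 < \<omega> e \<and> \<omega> e \<le> 1) \<and> (\<forall>a b. (a, b) \<in> E \<longrightarrow> \<omega> (a, b) = \<omega> (b, a))"

definition plen :: "nat list \<Rightarrow> nat" where
  "plen \<rho> = length \<rho> - 1"

definition is_path :: "(nat \<times> nat) set \<Rightarrow> nat list \<Rightarrow> bool" where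
  "is_path E \<rho> \<longleftrightarrow> \<rho> \<noteq> [] \<and> (\<forall>n\<in>{1..plen \<rho>}. (\<rho> ! (n - 1), \<rho> ! n) \<in> E)"

definition surv_pmf :: "(nat \<times> nat \<Rightarrow> real) \<Rightarrow> nat list \<Rightarrow> (nat \<Rightarrow> bool) pmf" where
  "surv_pmf \<omega> \<rho> = Pi_pmf {1..plen \<rho>} False (\<lambda>n. bernoulli_pmf (\<omega> (\<rho> ! (n - 1), \<rho> ! n)))"

definition a_var :: "(nat \<Rightarrow> bool) \<Rightarrow> nat \<Rightarrow> real" where
  "a_var s n = (\<Prod>i\<in>{1..n}. if s i then 1 else 0)"

text \<open>z_j(rho) = max_{n=1..|rho|} a_n(rho) * I{rho(n) = j}; the extra 0 only matters for |rho| = 0 (empty max := 0), since all terms are >= 0.\<close>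
definition z_var :: "nat list \<Rightarrow> nat \<Rightarrow> (nat \<Rightarrow> bool) \<Rightarrow> real" where
  "z_var \<rho> j s = Max (insert 0 ((\<lambda>n. a_var s n * (if \<rho> ! n = j then 1 else 0)) ` {1..plen \<rho>}))"

definition Ez :: "(nat \<times> nat \<Rightarrow> real) \<Rightarrow> nat list \<Rightarrow> nat \<Rightarrow> real" where
  "Ez \<omega> \<rho> j = measure_pmf.expectation (surv_pmf \<omega> \<rho>) (z_var \<rho> j)"

definition surv_prob :: "(nat \<times> nat \<Rightarrow> real) \<Rightarrow> nat list \<Rightarrow> real" where
  "surv_prob \<omega> \<rho> = measure_pmf.prob (surv_pmf \<omega> \<rho>) {s. a_var s (plen \<rho>) = 1}"

definition feasible :: "(nat \<times> nat) set \<Rightarrow> (nat \<times> nat \<Rightarrow> real) \<Rightarrow> nat \<Rightarrow> nat \<Rightarrow> real \<Rightarrow> nat list set" where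
  "feasible E \<omega> vs vt ps = {\<rho>. is_path E \<rho> \<and> \<rho> ! 0 = vs \<and> \<rho> ! plen \<rho> = vt \<and> surv_prob \<omega> \<rho> \<ge> ps}"

definition J_obj :: "nat \<Rightarrow> (nat \<Rightarrow> real) \<Rightarrow> (nat \<times> nat \<Rightarrow> real) \<Rightarrow> nat list set \<Rightarrow> real" where
  "J_obj V d \<omega> X = (\<Sum>j=1..V. d j * (1 - (\<Prod>\<rho>\<in>X. 1 - Ez \<omega> \<rho> j)))"

end

theory Submission
  imports Defs
begin

text \<open>Since the paths of a team survive independently, J is a weighted probabilistic coverage
  function: node j is missed by all of X with probability \<open>\<Prod>\<rho>\<in>X. 1 - Ez \<rho> j\<close>, a product of
  factors in [0,1]. Adding a path multiplies this miss probability by a factor in [0,1], so J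
  grows; and the gain from adding \<rho> is \<open>\<Sum>j. d j * Ez \<rho> j * (\<Prod>\<sigma>\<in>X. 1 - Ez \<sigma> j)\<close>, which
  shrinks as X grows. None of this uses the graph or the feasibility constraint.\<close>

definition coverage :: "'j set \<Rightarrow> ('j \<Rightarrow> real) \<Rightarrow> ('a \<Rightarrow> 'j \<Rightarrow> real) \<Rightarrow> 'a set \<Rightarrow> real" where
  "coverage J d p X = (\<Sum>j\<in>J. d j * (1 - (\<Prod>x\<in>X. 1 - p x j)))"

lemma prod_one_minus_in_unit:
  assumes "\<And>x. x \<in> X \<Longrightarrow> q x \<in> {0..1::real}"
  shows "(\<Prod>x\<in>X. 1 - q x) \<in> {0..1}"
  using assms by (auto intro!: prod_nonneg prod_le_1)

lemma prod_one_minus_antimono: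
  assumes "finite X'" "X \<subseteq> X'" "\<And>x. x \<in> X' \<Longrightarrow> q x \<in> {0..1::real}"
  shows "(\<Prod>x\<in>X'. 1 - q x) \<le> (\<Prod>x\<in>X. 1 - q x)"
proof -
  have "(\<Prod>x\<in>X'. 1 - q x) = (\<Prod>x\<in>X'-X. 1 - q x) * (\<Prod>x\<in>X. 1 - q x)"
    using prod.subset_diff[OF assms(2,1)] .
  also have "\<dots> \<le> 1 * (\<Prod>x\<in>X. 1 - q x)"
    using prod_one_minus_in_unit[of "X' - X" q] prod_one_minus_in_unit[of X q] assms(2,3)
    by (intro mult_right_mono) auto
  finally show ?thesis by simp
qed

lemma coverage_empty: "coverage J d p {} = 0"
  by (simp add: coverage_def)

lemma coverage_insert_gain:
  assumes "finite X" "x \<notin> X"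
  shows "coverage J d p (insert x X) - coverage J d p X
       = (\<Sum>j\<in>J. d j * p x j * (\<Prod>y\<in>X. 1 - p y j))"
  unfolding coverage_def using assms
  by (simp add: sum_subtractf[symmetric] algebra_simps)

context
  fixes J :: "'j set" and d :: "'j \<Rightarrow> real" and p :: "'a \<Rightarrow> 'j \<Rightarrow> real"
  assumes d_nonneg: "\<And>j. j \<in> J \<Longrightarrow> 0 \<le> d j"
    and p_unit: "\<And>x j. p x j \<in> {0..1}"
begin

lemma coverage_nonneg: "0 \<le> coverage J d p X"
  unfolding coverage_def
  using d_nonneg prod_one_minus_in_unit[of X "\<lambda>x. p x _", OF p_unit]
  by (intro sum_nonneg mult_nonneg_nonneg) auto

lemma coverage_mono:
  assumes "finite X'" "X \<subseteq> X'"
  shows "coverage J d p X \<le> coverage J d p X'"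
  unfolding coverage_def
  using d_nonneg prod_one_minus_antimono[OF assms, of "\<lambda>x. p x _", OF p_unit]
  by (intro sum_mono mult_left_mono) auto

lemma coverage_submodular:
  assumes "finite X'" "X \<subseteq> X'" "x \<notin> X'"
  shows "coverage J d p (insert x X') - coverage J d p X'
       \<le> coverage J d p (insert x X) - coverage J d p X"
proof -
  have "finite X" "x \<notin> X"
    using assms finite_subset by auto
  then show ?thesis
    unfolding coverage_insert_gain[OF assms(1,3)] coverage_insert_gain[OF \<open>finite X\<close> \<open>x \<notin> X\<close>]
    using d_nonneg p_unit prod_one_minus_antimono[OF assms(1,2), of "\<lambda>y. p y _", OF p_unit]
    by (intro sum_mono mult_left_mono mult_nonneg_nonneg) auto
qed

end

lemma expectation_in_unit:
  assumes "\<And>x. f x \<in> {0..1::real}"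
  shows "measure_pmf.expectation M f \<in> {0..1}"
proof -
  have "integrable (measure_pmf M) f"
    using assms by (intro measure_pmf.integrable_const_bound[where B = 1]) auto
  then show ?thesis
    using assms by (auto intro!: integral_nonneg_AE measure_pmf.integral_le_const)
qed

lemma a_var_in_unit: "a_var s n \<in> {0..1}"
  unfolding a_var_def by (auto intro!: prod_nonneg prod_le_1)

lemma z_var_in_unit: "z_var \<rho> j s \<in> {0..1}"
  unfolding z_var_def using a_var_in_unit[of s]
  by (auto simp: Max_ge_iff Max_le_iff)

lemma Ez_in_unit: "Ez \<omega> \<rho> j \<in> {0..1}"
  unfolding Ez_def by (rule expectation_in_unit) (rule z_var_in_unit)

lemma J_obj_eq_coverage: "J_obj V d \<omega> = coverage {1..V} d (Ez \<omega>)"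
  by (simp add: fun_eq_iff J_obj_def coverage_def)

theorem lemma1:
  fixes V :: nat and E :: "(nat \<times> nat) set" and \<omega> :: "nat \<times> nat \<Rightarrow> real"
    and vs vt :: nat and ps :: real and d :: "nat \<Rightarrow> real"
  assumes "simple_graph V E" and "valid_weights E \<omega>"
    and "vs \<in> {1..V}" and "vt \<in> {1..V}"
    and "0 < ps" and "ps \<le> 1"
    and "feasible E \<omega> vs vt ps \<noteq> {}"
    and "\<forall>j\<in>{1..V}. d j > 0"
  shows "J_obj V d \<omega> {} = 0
    \<and> (\<forall>X. finite X \<and> X \<subseteq> feasible E \<omega> vs vt ps \<longrightarrow> J_obj V d \<omega> X \<ge> 0)
    \<and> (\<forall>X X'. finite X' \<and> X \<subseteq> X' \<and> X' \<subseteq> feasible E \<omega> vs vt ps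
           \<longrightarrow> J_obj V d \<omega> X \<le> J_obj V d \<omega> X')
    \<and> (\<forall>X X' \<rho>. finite X' \<and> X \<subseteq> X' \<and> X' \<subset> feasible E \<omega> vs vt ps
           \<and> \<rho> \<in> feasible E \<omega> vs vt ps - X'
           \<longrightarrow> J_obj V d \<omega> (insert \<rho> X) - J_obj V d \<omega> X
               \<ge> J_obj V d \<omega> (insert \<rho> X') - J_obj V d \<omega> X')"
proof -
  have d_nonneg: "\<And>j. j \<in> {1..V} \<Longrightarrow> 0 \<le> d j"
    using assms(8) by fastforce
  note coverage_properties =
    coverage_nonneg[of "{1..V}" d "Ez \<omega>", OF d_nonneg Ez_in_unit]
    coverage_mono[of "{1..V}" d "Ez \<omega>", OF d_nonneg Ez_in_unit]
    coverage_submodular[of "{1..V}" d "Ez \<omega>", OF d_nonneg Ez_in_unit]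
  show ?thesis
    unfolding J_obj_eq_coverage
    using coverage_empty coverage_properties by (simp add: subset_eq)
qed

end
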